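(* Let $q$ be a prime power and let $\mathcal{C}\subseteq\mathbb{F}_q^N$ be a $(u,v)$-ordered-batch code of dimension $n$ and redundancy $r=N-n$, where $u,v$ are positive integers with $v\ge2$, $uv\le n$, and $q\ge\max\{4u\binom{n}{u},7\}$. For each $u$-subset $I=\{i_1,\dots,i_u\}\subseteq[n]$ fix a family of pairwise disjoint recovering sets $R_{j,l}=R_{j,l}(I)$ ($j\in[u]$, $l\in[v]$) as in the definition of a $(u,v)$-ordered-batch code. Then there exists an $(r-v+2)$-dimensional subspace $V$ of the dual code $\mathcal{C}^{\perp}$ such that for every $u$-subset $I=\{i_1,\dots,i_u\}\subseteq[n]$ and every $j\in[u]$, $V$ contains a vector $\mathbf{v}_j$ with $i_j\in\operatorname{supp}(\mathbf{v}_j)\subseteq\big(\bigcup_{l=2}^{v}R_{j,l}\big)\cup\{i_j\}$.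
   Context: $[m]=\{1,\dots,m\}$. A linear code $\mathcal{C}\subseteq\mathbb{F}^N$ of dimension $n$ is systematic if for every $\mathbf{x}\in\mathbb{F}^n$ there is a unique codeword whose first $n$ coordinates equal $\mathbf{x}$. A set $R\subseteq[N]$ is a recovering set for $i\in[n]$ if there are scalars $\lambda_k$ ($k\in R$) with $\mathbf{c}(i)=\sum_{k\in R}\lambda_k\mathbf{c}(k)$ for all $\mathbf{c}\in\mathcal{C}$. $(u,v)$-ordered-batch code: a systematic linear code $\mathcal{C}\subseteq\mathbb{F}^N$ of dimension $n$ such that for every set $I=\{i_1,\dots,i_u\}\subseteq[n]$ of $u$ distinct indices there exist $uv$ pairwise disjoint sets $R_{j,l}\subseteq[N]$ ($j\in[u]$, $l\in[v]$), each $R_{j,l}$ a recovering set for $i_j$, such that the directed graph $D_I$ with vertex set $I$ and an arc $i_j\to i_k$ (for $j,k\in[u]$, $j=k$ allowed) whenever $i_k\in\bigcup_{l=1}^{v}R_{j,l}$, is acyclic (no directed cycles, no loops). $\mathcal{C}^\perp$ is the dual code (dimension $r$), and $\operatorname{supp}(\mathbf{w})$ is the set of nonzero coordinates of $\mathbf{w}$. *)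

theory Defs
  imports Complex_Main "HOL-Library.Function_Algebras"
begin

text \<open>Vectors of F^N are functions nat => F supported on [N] = {1..N}.\<close>

definition smul :: "'a::field \<Rightarrow> (nat \<Rightarrow> 'a) \<Rightarrow> (nat \<Rightarrow> 'a)" where
  "smul c x = (\<lambda>i. c * x i)"

definition vecs :: "nat \<Rightarrow> (nat \<Rightarrow> 'a::field) set" where
  "vecs N = {x. \<forall>i. i \<notin> {1..N} \<longrightarrow> x i = 0}"

definition is_subspace :: "(nat \<Rightarrow> 'a::field) set \<Rightarrow> bool" where
  "is_subspace V = module.subspace smul V"

definition vdim :: "(nat \<Rightarrow> 'a::field) set \<Rightarrow> nat" where
  "vdim V = vector_space.dim smul V"

definition linear_code :: "nat \<Rightarrow> (nat \<Rightarrow> 'a::field) set \<Rightarrow> bool" where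
  "linear_code N C \<longleftrightarrow> C \<subseteq> vecs N \<and> is_subspace C"

definition systematic :: "nat \<Rightarrow> nat \<Rightarrow> (nat \<Rightarrow> 'a::field) set \<Rightarrow> bool" where
  "systematic N n C \<longleftrightarrow> n \<le> N \<and>
     (\<forall>x \<in> vecs n. \<exists>!c. c \<in> C \<and> (\<forall>i\<in>{1..n}. c i = x i))"

definition supp :: "(nat \<Rightarrow> 'a::zero) \<Rightarrow> nat set" where
  "supp w = {k. w k \<noteq> 0}"

definition recovering_set :: "nat \<Rightarrow> (nat \<Rightarrow> 'a::field) set \<Rightarrow> nat \<Rightarrow> nat set \<Rightarrow> bool" where
  "recovering_set N C i R \<longleftrightarrow> R \<subseteq> {1..N} \<and>
     (\<exists>lam. \<forall>c\<in>C. c i = (\<Sum>k\<in>R. lam k * c k))"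

text \<open>Family of recovering sets for the u-subset I, indexed by the elements i of I
  (i plays the role of i_j) and l in [v]: RI i l = R_{j,l}.\<close>
definition ob_family ::
  "nat \<Rightarrow> (nat \<Rightarrow> 'a::field) set \<Rightarrow> nat \<Rightarrow> nat set \<Rightarrow> (nat \<Rightarrow> nat \<Rightarrow> nat set) \<Rightarrow> bool" where
  "ob_family N C v I RI \<longleftrightarrow>
     (\<forall>i\<in>I. \<forall>l\<in>{1..v}. recovering_set N C i (RI i l)) \<and>
     (\<forall>i\<in>I. \<forall>l\<in>{1..v}. \<forall>i'\<in>I. \<forall>l'\<in>{1..v}. (i, l) \<noteq> (i', l') \<longrightarrow> RI i l \<inter> RI i' l' = {}) \<and>
     acyclic {(a, b). a \<in> I \<and> b \<in> I \<and> b \<in> (\<Union>l\<in>{1..v}. RI a l)}"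

definition ordered_batch_code ::
  "nat \<Rightarrow> nat \<Rightarrow> nat \<Rightarrow> nat \<Rightarrow> (nat \<Rightarrow> 'a::field) set \<Rightarrow> bool" where
  "ordered_batch_code N n u v C \<longleftrightarrow> linear_code N C \<and> systematic N n C \<and> vdim C = n \<and>
     (\<forall>I. I \<subseteq> {1..n} \<and> card I = u \<longrightarrow> (\<exists>RI. ob_family N C v I RI))"

definition dual_code :: "nat \<Rightarrow> (nat \<Rightarrow> 'a::field) set \<Rightarrow> (nat \<Rightarrow> 'a) set" where
  "dual_code N C = {w \<in> vecs N. \<forall>c\<in>C. (\<Sum>k\<in>{1..N}. w k * c k) = 0}"

end

theory Submission
  imports Defs "HOL-Library.FuncSet"
begin

text \<open>
  A recovering set \<open>R\<close> for \<open>i\<close> with \<open>i \<notin> R\<close> is the same thing as a dual codeword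
  \<open>e_i - (\<Sum>k\<in>R. \<lambda>_k e_k)\<close>. For a pair \<open>(I, i_j)\<close> the dual codewords coming from the disjoint
  sets \<open>R_{j,2}, \<dots>, R_{j,v}\<close> are linearly independent. Hence, with \<open>S = (\<Union>l\<in>{2..v}. R_{j,l})\<close>,
  the dual code contains a vector supported in \<open>S \<union> {i_j}\<close> with \<open>i_j\<close> in its support, and a
  \<open>(v - 2)\<close>-dimensional space of vectors supported in \<open>S\<close>. Acyclicity of \<open>D_I\<close> is needed only
  to know \<open>i_j \<notin> R_{j,l}\<close>.

  Starting from the dual code, cut \<open>v - 2\<close> times by a hyperplane that contains no vector of a
  chosen family of nonzero vectors \<open>z_{I,j}\<close>, one from each of these small spaces. There are only
  \<open>u * (n choose u) < q\<close> pairs, so counting the vectors orthogonal to some \<open>z_{I,j}\<close> shows that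
  such a hyperplane exists. Each cut lowers the dimension of the current space and of every small
  space by exactly one, and a vector with \<open>i_j\<close> in its support survives after subtracting a
  multiple of \<open>z_{I,j}\<close>.
\<close>

section \<open>Vectors supported on {1..N}\<close>

interpretation vec: vector_space "smul :: 'a::field \<Rightarrow> (nat \<Rightarrow> 'a) \<Rightarrow> (nat \<Rightarrow> 'a)"
  by unfold_locales (auto simp: smul_def fun_eq_iff algebra_simps)

lemma sum_fun_apply: "(\<Sum>k\<in>A. f k) (i::nat) = (\<Sum>k\<in>A. f k i)"
  by (induction A rule: infinite_finite_induct) auto

definition unit_vec :: "nat \<Rightarrow> nat \<Rightarrow> 'a::field" where
  "unit_vec k = (\<lambda>i. if i = k then 1 else 0)"

definition dot :: "nat \<Rightarrow> (nat \<Rightarrow> 'a::field) \<Rightarrow> (nat \<Rightarrow> 'a) \<Rightarrow> 'a" where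
  "dot N y x = (\<Sum>k\<in>{1..N}. y k * x k)"

definition hyperplane :: "nat \<Rightarrow> (nat \<Rightarrow> 'a::field) \<Rightarrow> (nat \<Rightarrow> 'a) set" where
  "hyperplane N y = {x. dot N y x = 0}"

definition supported_on :: "nat set \<Rightarrow> (nat \<Rightarrow> 'a::field) set" where
  "supported_on A = {x. supp x \<subseteq> A}"

lemma sum_smul_unit_vec_apply:
  "finite A \<Longrightarrow> (\<Sum>k\<in>A. smul (c k) (unit_vec k)) i = (if i \<in> A then c i else 0)"
  by (simp add: sum_fun_apply smul_def unit_vec_def if_distrib[of "\<lambda>t. _ * t"] cong: if_cong)

lemma unit_vec_in_vecs: "k \<in> {1..N} \<Longrightarrow> unit_vec k \<in> vecs N"
  by (auto simp: unit_vec_def vecs_def)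

lemma vecs_subspace: "vec.subspace (vecs N :: (nat \<Rightarrow> 'a::field) set)"
  unfolding vec.subspace_def vecs_def by (auto simp: smul_def)

lemma supported_on_subspace: "vec.subspace (supported_on A :: (nat \<Rightarrow> 'a::field) set)"
  unfolding vec.subspace_def supported_on_def supp_def
  by (auto simp: smul_def subset_iff) (metis add.right_neutral)

lemma vecs_eq_sum_unit_vec:
  "x \<in> vecs N \<Longrightarrow> x = (\<Sum>k\<in>{1..N}. smul (x k) (unit_vec k :: nat \<Rightarrow> 'a::field))"
  by (auto simp: fun_eq_iff sum_smul_unit_vec_apply vecs_def)

lemma vecs_subset_span_unit_vec: "vecs N \<subseteq> vec.span ((unit_vec :: nat \<Rightarrow> nat \<Rightarrow> 'a::field) ` {1..N})"
proof
  fix x :: "nat \<Rightarrow> 'a" assume "x \<in> vecs N"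
  moreover have "(\<Sum>k\<in>{1..N}. smul (x k) (unit_vec k)) \<in> vec.span (unit_vec ` {1..N})"
    by (intro vec.span_sum vec.span_scale vec.span_base) auto
  ultimately show "x \<in> vec.span (unit_vec ` {1..N})"
    using vecs_eq_sum_unit_vec by metis
qed

lemma independent_vecs_finite:
  "B \<subseteq> vecs N \<Longrightarrow> vec.independent (B :: (nat \<Rightarrow> 'a::field) set) \<Longrightarrow> finite B"
  using vec.independent_span_bound[of "unit_vec ` {1..N}" B] vecs_subset_span_unit_vec by blast

lemma dim_mono_vecs:
  assumes "S \<subseteq> T" "T \<subseteq> (vecs N :: (nat \<Rightarrow> 'a::field) set)"
  shows "vec.dim S \<le> vec.dim T"
proof -
  obtain B where B: "B \<subseteq> T" "vec.independent B" "T \<subseteq> vec.span B" "card B = vec.dim T"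
    using vec.basis_exists by blast
  have "finite B" using independent_vecs_finite B(1,2) assms(2) by blast
  then show ?thesis using vec.dim_le_card[of S B] assms(1) B by auto
qed

lemma dim_pos_imp_nonzero: "0 < vec.dim (T :: (nat \<Rightarrow> 'a::field) set) \<Longrightarrow> \<exists>z\<in>T. z \<noteq> 0"
  using vec.dim_le_card[of T "{}"] by force

lemma dot_add: "dot N y (a + b) = dot N y a + dot N y b"
  by (simp add: dot_def algebra_simps sum.distrib)

lemma dot_diff: "dot N y (a - b) = dot N y a - dot N y b"
  by (simp add: dot_def algebra_simps sum_subtractf)

lemma dot_smul: "dot N y (smul c x) = c * dot N y x"
  by (simp add: dot_def smul_def sum_distrib_left algebra_simps)

lemma dot_commute: "dot N y x = dot N x y"
  by (simp add: dot_def mult.commute)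

lemma dot_unit_vec: "k \<in> {1..N} \<Longrightarrow> dot N c (unit_vec k) = c k"
  by (simp add: dot_def unit_vec_def if_distrib[of "\<lambda>t. c _ * t"] cong: if_cong)

lemma dot_sum: "dot N y (\<Sum>i\<in>A. f i) = (\<Sum>i\<in>A. dot N y (f i))"
  by (simp add: dot_def sum_fun_apply sum_distrib_left) (rule sum.swap)

lemma hyperplane_unit_vec: "i \<in> {1..N} \<Longrightarrow> hyperplane N (unit_vec i) = {x. x i = 0}"
  by (simp add: hyperplane_def dot_commute[of N "unit_vec i"] dot_unit_vec)

lemma hyperplane_subspace: "vec.subspace (hyperplane N y :: (nat \<Rightarrow> 'a::field) set)"
  unfolding vec.subspace_def hyperplane_def by (auto simp: dot_add dot_smul) (simp add: dot_def)

lemma dim_eq_dim_inter_hyperplane_Suc: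
  fixes U :: "(nat \<Rightarrow> 'a::field) set"
  assumes U: "vec.subspace U" "U \<subseteq> vecs N" and s: "s \<in> U" "dot N y s \<noteq> 0"
  shows "vec.dim U = vec.dim (U \<inter> hyperplane N y) + 1"
proof -
  let ?K = "U \<inter> hyperplane N y"
  obtain B where B: "B \<subseteq> ?K" "vec.independent B" "?K \<subseteq> vec.span B" "card B = vec.dim ?K"
    using vec.basis_exists by blast
  have "finite B" using independent_vecs_finite B(1,2) U(2) by blast
  have "vec.span B \<subseteq> ?K"
    using B(1) by (intro vec.span_minimal vec.subspace_inter U(1) hyperplane_subspace)
  then have s_notin: "s \<notin> vec.span B" using s(2) by (auto simp: hyperplane_def)
  have "U \<subseteq> vec.span (insert s B)"
  proof
    fix x assume x: "x \<in> U"
    define c where "c = dot N y x / dot N y s"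
    have "x - smul c s \<in> ?K"
      using x s U(1) by (auto simp: hyperplane_def dot_diff dot_smul c_def vec.subspace_diff vec.subspace_scale)
    then have "(x - smul c s) + smul c s \<in> vec.span (insert s B)"
      using B(3) vec.span_mono[of B "insert s B"]
      by (intro vec.span_add vec.span_scale) (auto intro: vec.span_base)
    then show "x \<in> vec.span (insert s B)" by simp
  qed
  then have "vec.dim U = card (insert s B)"
    using B s s_notin by (intro vec.dim_unique) (auto simp: vec.independent_insert)
  moreover have "s \<notin> B" using s_notin vec.span_base by blast
  ultimately show ?thesis using \<open>finite B\<close> B(4) by simp
qed

section \<open>Counting over a finite field\<close>

lemma bij_betw_restrict_vecs:
  "bij_betw (\<lambda>x. restrict x {1..N}) (vecs N :: (nat \<Rightarrow> 'a::field) set) (PiE {1..N} (\<lambda>_. UNIV))"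
proof (rule bij_betw_byWitness[where f' = "\<lambda>f i. if i \<in> {1..N} then f i else 0"])
  show "\<forall>x\<in>vecs N. (\<lambda>i. if i \<in> {1..N} then restrict x {1..N} i else 0) = (x :: nat \<Rightarrow> 'a)"
    by (auto simp: vecs_def fun_eq_iff)
  show "\<forall>f\<in>PiE {1..N} (\<lambda>_. UNIV :: 'a set).
      restrict (\<lambda>i. if i \<in> {1..N} then f i else 0) {1..N} = f"
    by (simp cong: restrict_cong)
  show "(\<lambda>x. restrict x {1..N}) ` vecs N \<subseteq> PiE {1..N} (\<lambda>_. UNIV :: 'a set)"
    by auto
  show "(\<lambda>f i. if i \<in> {1..N} then f i else 0) ` PiE {1..N} (\<lambda>_. UNIV) \<subseteq> (vecs N :: (nat \<Rightarrow> 'a) set)"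
    by (auto simp: vecs_def)
qed

lemma finite_vecs: "finite (vecs N :: (nat \<Rightarrow> 'a::{finite,field}) set)"
  using bij_betw_finite[OF bij_betw_restrict_vecs[of N, where 'a = 'a]] by (simp add: finite_PiE)

lemma card_vecs: "card (vecs N :: (nat \<Rightarrow> 'a::{finite,field}) set) = card (UNIV :: 'a set) ^ N"
  using bij_betw_same_card[OF bij_betw_restrict_vecs[of N, where 'a = 'a]] by (simp add: card_PiE)

lemma card_vecs_hyperplane_le:
  fixes z :: "nat \<Rightarrow> 'a::{finite,field}"
  assumes z: "z \<in> vecs N" "z \<noteq> 0"
  shows "card (vecs N \<inter> hyperplane N z) \<le> card (UNIV :: 'a set) ^ (N - 1)"
proof -
  obtain k0 where k0: "z k0 \<noteq> 0" using z(2) by (auto simp: fun_eq_iff)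
  have k0N: "k0 \<in> {1..N}" using z(1) k0 by (auto simp: vecs_def)
  let ?A = "{1..N} - {k0}"
  have dot_split: "dot N z y = z k0 * y k0 + (\<Sum>k\<in>?A. z k * y k)" for y
    unfolding dot_def using k0N by (simp add: sum.remove)
  \<comment> \<open>The coordinate at \<open>k0\<close> of a vector orthogonal to \<open>z\<close> is determined by the others.\<close>
  have "inj_on (\<lambda>y. restrict y ?A) (vecs N \<inter> hyperplane N z)"
  proof (rule inj_onI)
    fix y y' assume y: "y \<in> vecs N \<inter> hyperplane N z" and y': "y' \<in> vecs N \<inter> hyperplane N z"
      and eq: "restrict y ?A = restrict y' ?A"
    have agree: "y k = y' k" if "k \<in> ?A" for k
      using fun_cong[OF eq, of k] that by simp
    have "dot N z y = 0" "dot N z y' = 0" using y y' by (simp_all add: hyperplane_def)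
    moreover have "(\<Sum>k\<in>?A. z k * y k) = (\<Sum>k\<in>?A. z k * y' k)" using agree by simp
    ultimately have "z k0 * y k0 = z k0 * y' k0"
      using dot_split[of y] dot_split[of y'] by (metis add_right_cancel)
    then have "y k0 = y' k0" using k0 by simp
    have "y k = y' k" for k
      using agree[of k] \<open>y k0 = y' k0\<close> y y' by (cases "k \<in> {1..N}") (auto simp: vecs_def)
    then show "y = y'" by (rule ext)
  qed
  then have "card (vecs N \<inter> hyperplane N z) \<le> card (PiE ?A (\<lambda>_. UNIV :: 'a set))"
    by (rule card_inj_on_le) (auto simp: image_subset_iff intro: finite_PiE)
  also have "\<dots> = card (UNIV :: 'a set) ^ (N - 1)" using k0N by (simp add: card_PiE)
  finally show ?thesis .
qed

lemma exists_vec_nonorthogonal: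
  fixes Z :: "(nat \<Rightarrow> 'a::{finite,field}) set"
  assumes Z: "finite Z" "Z \<subseteq> vecs N" "0 \<notin> Z" "card Z < card (UNIV :: 'a set)"
  shows "\<exists>y\<in>vecs N. \<forall>z\<in>Z. dot N y z \<noteq> 0"
proof (cases "N = 0")
  case True
  then have "vecs N = {0 :: nat \<Rightarrow> 'a}" by (auto simp: vecs_def fun_eq_iff)
  then have "Z = {}" using Z(2,3) by auto
  then show ?thesis using vec.subspace_0[OF vecs_subspace] by blast
next
  case False
  have "card (\<Union>z\<in>Z. vecs N \<inter> hyperplane N z) \<le> (\<Sum>z\<in>Z. card (vecs N \<inter> hyperplane N z))"
    using Z(1) by (rule card_UN_le)
  also have "\<dots> \<le> (\<Sum>z\<in>Z. card (UNIV :: 'a set) ^ (N - 1))"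
    using Z by (intro sum_mono card_vecs_hyperplane_le) auto
  also have "\<dots> = card Z * card (UNIV :: 'a set) ^ (N - 1)" by simp
  also have "\<dots> < card (UNIV :: 'a set) * card (UNIV :: 'a set) ^ (N - 1)"
    using Z(4) by (intro mult_strict_right_mono) auto
  also have "\<dots> = card (vecs N :: (nat \<Rightarrow> 'a) set)"
    using False by (simp add: card_vecs flip: power_Suc)
  finally have lt: "card (\<Union>z\<in>Z. vecs N \<inter> hyperplane N z) < card (vecs N :: (nat \<Rightarrow> 'a) set)" .
  have "\<not> vecs N \<subseteq> (\<Union>z\<in>Z. vecs N \<inter> hyperplane N z)"
  proof
    assume "vecs N \<subseteq> (\<Union>z\<in>Z. vecs N \<inter> hyperplane N z)"
    then have "card (vecs N :: (nat \<Rightarrow> 'a) set) \<le> card (\<Union>z\<in>Z. vecs N \<inter> hyperplane N z)"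
      by (intro card_mono) (auto intro: finite_subset[OF _ finite_vecs])
    with lt show False by simp
  qed
  then show ?thesis by (auto simp: hyperplane_def dot_commute)
qed

section \<open>Independence and the dual code\<close>

lemma independent_if_private_coords:
  fixes w :: "'i \<Rightarrow> nat \<Rightarrow> 'a::field"
  assumes "finite L"
    and own: "\<And>l. l \<in> L \<Longrightarrow> w l (key l) \<noteq> 0"
    and others: "\<And>l l'. l \<in> L \<Longrightarrow> l' \<in> L \<Longrightarrow> l' \<noteq> l \<Longrightarrow> w l' (key l) = 0"
  shows "inj_on w L" and "vec.independent (w ` L)"
proof -
  show inj: "inj_on w L"
  proof (rule inj_onI)
    fix l l' assume "l \<in> L" "l' \<in> L" "w l = w l'"
    then show "l = l'" using own[of l] others[of l l'] by fastforce
  qed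
  show "vec.independent (w ` L)"
  proof (rule vec.independent_if_scalars_zero)
    show "finite (w ` L)" using \<open>finite L\<close> by simp
    fix f x assume sum0: "(\<Sum>x\<in>w ` L. smul (f x) x) = 0" and "x \<in> w ` L"
    then obtain l where l: "l \<in> L" "x = w l" by auto
    have "0 = (\<Sum>l'\<in>L. f (w l') * w l' (key l))"
      using fun_cong[OF sum0, of "key l"] sum.reindex[OF inj, of "\<lambda>x. f x * x (key l)"]
      by (simp add: sum_fun_apply smul_def)
    also have "\<dots> = f (w l) * w l (key l)"
      using \<open>finite L\<close> l(1) others by (simp add: sum.remove)
    finally show "f x = 0" using own[OF l(1)] l(2) by simp
  qed
qed

lemma dual_code_eq: "dual_code N C = {w \<in> vecs N. \<forall>c\<in>C. dot N w c = 0}"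
  by (simp add: dual_code_def dot_def)

lemma dual_code_subspace: "vec.subspace (dual_code N C :: (nat \<Rightarrow> 'a::field) set)"
proof -
  have "dual_code N C = vecs N \<inter> (\<Inter>c\<in>C. hyperplane N c)"
    by (auto simp: dual_code_eq hyperplane_def dot_commute)
  then show ?thesis
    by (auto intro!: vec.subspace_inter vecs_subspace vec.subspace_Inter hyperplane_subspace)
qed

section \<open>Dimension of the dual of a systematic code\<close>

locale systematic_code =
  fixes N n :: nat and C :: "(nat \<Rightarrow> 'a::field) set"
  assumes linear: "linear_code N C" and systematic: "systematic N n C"
begin

lemma dimension_le_length: "n \<le> N"
  using systematic by (simp add: systematic_def)

lemma code_subspace: "vec.subspace C"
  using linear by (simp add: linear_code_def is_subspace_def)

lemma unique_extension: "x \<in> vecs n \<Longrightarrow> \<exists>!c. c \<in> C \<and> (\<forall>j\<in>{1..n}. c j = x j)"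
  using systematic unfolding systematic_def by (elim conjE bspec)

lemma code_eq_if_agree:
  assumes "c \<in> C" "c' \<in> C" "\<forall>j\<in>{1..n}. c j = c' j"
  shows "c = c'"
proof -
  let ?x = "\<lambda>j. if j \<in> {1..n} then c j else 0"
  have "\<exists>!d. d \<in> C \<and> (\<forall>j\<in>{1..n}. d j = ?x j)"
    by (rule unique_extension) (simp add: vecs_def)
  moreover have "c \<in> C \<and> (\<forall>j\<in>{1..n}. c j = ?x j)" "c' \<in> C \<and> (\<forall>j\<in>{1..n}. c' j = ?x j)"
    using assms by auto
  ultimately show ?thesis by (metis ex1E)
qed

definition gen :: "nat \<Rightarrow> nat \<Rightarrow> 'a" where
  "gen i = (THE c. c \<in> C \<and> (\<forall>j\<in>{1..n}. c j = unit_vec i j))"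

lemma gen_in_code: "i \<in> {1..n} \<Longrightarrow> gen i \<in> C"
  and gen_apply: "i \<in> {1..n} \<Longrightarrow> j \<in> {1..n} \<Longrightarrow> gen i j = unit_vec i j"
proof -
  assume "i \<in> {1..n}"
  then have "\<exists>!c. c \<in> C \<and> (\<forall>j\<in>{1..n}. c j = unit_vec i j)"
    by (rule unique_extension[OF unit_vec_in_vecs])
  then have "gen i \<in> C \<and> (\<forall>j\<in>{1..n}. gen i j = unit_vec i j)"
    unfolding gen_def by (rule theI')
  then show "gen i \<in> C" and "j \<in> {1..n} \<Longrightarrow> gen i j = unit_vec i j" by auto
qed

lemma code_eq_sum_gen: "c \<in> C \<Longrightarrow> c = (\<Sum>i\<in>{1..n}. smul (c i) (gen i))"
proof (rule code_eq_if_agree)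
  show "(\<Sum>i\<in>{1..n}. smul (c i) (gen i)) \<in> C"
    using code_subspace gen_in_code by (intro vec.subspace_sum vec.subspace_scale) auto
  show "\<forall>j\<in>{1..n}. c j = (\<Sum>i\<in>{1..n}. smul (c i) (gen i)) j"
    by (simp add: sum_fun_apply smul_def gen_apply unit_vec_def if_distrib[of "\<lambda>t. _ * t"]
        cong: if_cong)
qed

text \<open>The rows of the parity-check matrix \<open>[-G\<^sup>T | I]\<close> of the generator matrix \<open>[I | G]\<close>
  whose rows are the \<open>gen i\<close>.\<close>
definition parity :: "nat \<Rightarrow> nat \<Rightarrow> 'a" where
  "parity k = (\<lambda>m. if m \<in> {1..n} then - gen m k else unit_vec k m)"

lemma parity_in_dual_code:
  assumes k: "k \<in> {n+1..N}"
  shows "parity k \<in> dual_code N C"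
proof -
  have "parity k \<in> vecs N"
    using k by (auto simp: parity_def unit_vec_def vecs_def)
  moreover have "dot N (parity k) c = 0" if c: "c \<in> C" for c
  proof -
    have "{1..N} = {1..n} \<union> {n+1..N}" using dimension_le_length by auto
    then have "dot N (parity k) c = - (\<Sum>m\<in>{1..n}. gen m k * c m) + c k"
      using k by (simp add: dot_def sum.union_disjoint parity_def unit_vec_def sum_negf
          if_distrib[of "\<lambda>t. t * _"] cong: if_cong)
    also have "c k = (\<Sum>m\<in>{1..n}. gen m k * c m)"
      by (subst code_eq_sum_gen[OF c]) (simp add: sum_fun_apply smul_def mult.commute)
    finally show ?thesis by simp
  qed
  ultimately show ?thesis by (simp add: dual_code_eq)
qed

lemma dual_code_eq_sum_parity:
  assumes w: "w \<in> dual_code N C"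
  shows "w = (\<Sum>k\<in>{n+1..N}. smul (w k) (parity k))"
proof
  fix m
  show "w m = (\<Sum>k\<in>{n+1..N}. smul (w k) (parity k)) m"
  proof (cases "m \<in> {1..n}")
    case True
    have "{1..N} = {1..n} \<union> {n+1..N}" using dimension_le_length by auto
    moreover have "dot N w (gen m) = 0" using w gen_in_code[OF True] by (simp add: dual_code_eq)
    ultimately have "w m + (\<Sum>k\<in>{n+1..N}. w k * gen m k) = 0"
      using True by (simp add: dot_def sum.union_disjoint gen_apply unit_vec_def
          if_distrib[of "\<lambda>t. _ * t"] cong: if_cong)
    then have "w m = - (\<Sum>k\<in>{n+1..N}. w k * gen m k)"
      by (simp add: eq_neg_iff_add_eq_0)
    also have "\<dots> = (\<Sum>k\<in>{n+1..N}. smul (w k) (parity k)) m"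
      using True by (simp add: sum_fun_apply smul_def parity_def sum_negf)
    finally show ?thesis .
  next
    case False
    then have "parity k m = unit_vec k m" for k
      unfolding parity_def by (rule if_not_P)
    then have "(\<Sum>k\<in>{n+1..N}. smul (w k) (parity k)) m = (\<Sum>k\<in>{n+1..N}. smul (w k) (unit_vec k)) m"
      by (simp add: sum_fun_apply smul_def)
    also have "\<dots> = (if m \<in> {n+1..N} then w m else 0)" by (simp add: sum_smul_unit_vec_apply)
    also have "\<dots> = w m" using False w by (auto simp: dual_code_def vecs_def)
    finally show ?thesis ..
  qed
qed

lemma dim_dual_code: "vec.dim (dual_code N C) = N - n"
proof -
  have parity_own: "parity k m = (if m = k then 1 else 0)" if "m \<in> {n+1..N}" for k m
    using that by (simp add: parity_def unit_vec_def)
  have own: "parity k k \<noteq> 0" if "k \<in> {n+1..N}" for k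
    using parity_own[OF that, of k] by simp
  have others: "parity k' k = 0" if "k \<in> {n+1..N}" "k' \<noteq> k" for k k'
    using parity_own[OF that(1), of k'] that(2) by simp
  have inj: "inj_on parity {n+1..N}" and indep: "vec.independent (parity ` {n+1..N})"
    using independent_if_private_coords[of "{n+1..N}" parity "\<lambda>k. k", OF _ own others] by auto
  show ?thesis
  proof (rule vec.dim_unique[OF _ _ indep])
    show "parity ` {n+1..N} \<subseteq> dual_code N C" using parity_in_dual_code by auto
    show "dual_code N C \<subseteq> vec.span (parity ` {n+1..N})"
    proof
      fix w assume "w \<in> dual_code N C"
      moreover have "(\<Sum>k\<in>{n+1..N}. smul (w k) (parity k)) \<in> vec.span (parity ` {n+1..N})"
        by (intro vec.span_sum vec.span_scale vec.span_base) auto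
      ultimately show "w \<in> vec.span (parity ` {n+1..N})"
        using dual_code_eq_sum_parity by metis
    qed
    show "card (parity ` {n+1..N}) = N - n" using card_image[OF inj] by simp
  qed
qed

end

section \<open>Parity checks from recovering sets\<close>

lemma recovering_set_dual_vector:
  assumes rec: "recovering_set N C i R" and i: "i \<in> {1..N}" "i \<notin> R"
    and c0: "c0 \<in> C" "c0 i \<noteq> 0"
  shows "\<exists>w\<in>dual_code N C. w i = 1 \<and> supp w \<subseteq> insert i R \<and> (\<exists>k\<in>R. w k \<noteq> 0)"
proof -
  obtain lam where lam: "\<And>c. c \<in> C \<Longrightarrow> c i = (\<Sum>k\<in>R. lam k * c k)" and R: "R \<subseteq> {1..N}"
    using rec by (auto simp: recovering_set_def)
  have "finite R" using R finite_subset by blast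
  define w where "w = unit_vec i - (\<Sum>k\<in>R. smul (lam k) (unit_vec k))"
  have "w m = unit_vec i m - (if m \<in> R then lam m else 0)" for m
    using \<open>finite R\<close> by (simp add: w_def sum_smul_unit_vec_apply)
  then have w_apply: "w m = (if m = i then 1 else if m \<in> R then - lam m else 0)" for m
    using i(2) by (auto simp: unit_vec_def)
  have "dot N c w = 0" if "c \<in> C" for c
  proof -
    have "dot N c w = c i - (\<Sum>k\<in>R. lam k * c k)"
      using i(1) R by (auto simp: w_def dot_diff dot_sum dot_smul dot_unit_vec intro!: sum.cong)
    then show ?thesis using lam[OF that] by simp
  qed
  moreover have "w \<in> vecs N" using i(1) R by (auto simp: vecs_def w_apply)
  ultimately have "w \<in> dual_code N C" by (simp add: dual_code_eq dot_commute)
  moreover have "\<exists>k\<in>R. lam k \<noteq> 0"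
  proof (rule ccontr)
    assume "\<not> (\<exists>k\<in>R. lam k \<noteq> 0)"
    then have "(\<Sum>k\<in>R. lam k * c0 k) = 0" by simp
    then show False using lam[OF c0(1)] c0(2) by simp
  qed
  ultimately show ?thesis
    using i(2) by (intro bexI[of _ w]) (auto simp: w_apply supp_def)
qed

lemma dual_code_vectors_of_disjoint_recovering_sets:
  fixes R :: "'l \<Rightarrow> nat set"
  assumes L: "finite L" "L \<noteq> {}"
    and rec: "\<And>l. l \<in> L \<Longrightarrow> recovering_set N C i (R l)" and not_in: "\<And>l. l \<in> L \<Longrightarrow> i \<notin> R l"
    and disj: "\<And>l l'. l \<in> L \<Longrightarrow> l' \<in> L \<Longrightarrow> l \<noteq> l' \<Longrightarrow> R l \<inter> R l' = {}"
    and i: "i \<in> {1..N}" and c0: "c0 \<in> C" "c0 i \<noteq> 0"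
  shows "\<exists>x\<in>dual_code N C \<inter> supported_on (insert i (\<Union>l\<in>L. R l)). x i \<noteq> 0"
    and "card L - 1 \<le> vec.dim (dual_code N C \<inter> supported_on (\<Union>l\<in>L. R l))"
proof -
  let ?D = "dual_code N C" and ?S = "\<Union>l\<in>L. R l"
  obtain l0 where l0: "l0 \<in> L" using L(2) by blast
  obtain w key where w: "\<And>l. l \<in> L \<Longrightarrow> w l \<in> ?D \<and> w l i = 1 \<and> supp (w l) \<subseteq> insert i (R l)"
    and key: "\<And>l. l \<in> L \<Longrightarrow> key l \<in> R l \<and> w l (key l) \<noteq> 0"
    using recovering_set_dual_vector[OF rec i not_in c0] by metis
  have W: "w ` L \<subseteq> ?D \<inter> supported_on (insert i ?S)"
    using w by (fastforce simp: supported_on_def)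
  then show "\<exists>x\<in>?D \<inter> supported_on (insert i ?S). x i \<noteq> 0"
    using w[OF l0] l0 by (intro bexI[of _ "w l0"]) auto
  have others: "w l' (key l) = 0" if "l \<in> L" "l' \<in> L" "l' \<noteq> l" for l l'
  proof -
    have "key l \<notin> insert i (R l')" using key[OF that(1)] not_in[OF that(1)] disj[of l l'] that by auto
    then show ?thesis using w[OF that(2)] by (auto simp: supp_def)
  qed
  have inj: "inj_on w L" and indep: "vec.independent (w ` L)"
    using independent_if_private_coords[OF L(1), of w key] key others by auto
  let ?T = "vec.span (w ` L)"
  have T: "?T \<subseteq> ?D \<inter> supported_on (insert i ?S)"
    using W by (intro vec.span_minimal vec.subspace_inter dual_code_subspace supported_on_subspace)
  then have TN: "?T \<subseteq> vecs N" by (auto simp: dual_code_def)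
  have "card L = vec.dim ?T"
    using vec.dim_eq_card_independent[OF indep] card_image[OF inj] by simp
  also have "\<dots> = vec.dim (?T \<inter> hyperplane N (unit_vec i)) + 1"
    using w[OF l0] i TN vec.span_base[of "w l0" "w ` L"] l0
    by (intro dim_eq_dim_inter_hyperplane_Suc) (auto simp: dot_commute[of N "unit_vec i"] dot_unit_vec)
  also have "vec.dim (?T \<inter> hyperplane N (unit_vec i)) \<le> vec.dim (?D \<inter> supported_on ?S)"
  proof (rule dim_mono_vecs)
    show "?T \<inter> hyperplane N (unit_vec i) \<subseteq> ?D \<inter> supported_on ?S"
      using T i by (fastforce simp: hyperplane_unit_vec supported_on_def supp_def)
  qed (auto simp: dual_code_def)
  finally show "card L - 1 \<le> vec.dim (?D \<inter> supported_on ?S)" by simp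
qed

lemma ob_family_not_self_recovering:
  assumes "ob_family N C v I RI" "i \<in> I" "l \<in> {1..v}"
  shows "i \<notin> RI i l"
proof
  let ?r = "{(a, b). a \<in> I \<and> b \<in> I \<and> b \<in> (\<Union>l\<in>{1..v}. RI a l)}"
  assume "i \<in> RI i l"
  then have "(i, i) \<in> ?r\<^sup>+" using assms(2,3) by blast
  moreover have "acyclic ?r" using assms(1) unfolding ob_family_def by blast
  ultimately show False unfolding acyclic_def by blast
qed

lemma (in systematic_code) ob_family_dual_vectors:
  assumes fam: "ob_family N C v I RI" and I: "I \<subseteq> {1..n}" "i \<in> I" and v: "2 \<le> v"
  shows "i \<notin> (\<Union>l\<in>{2..v}. RI i l)"
    and "\<exists>x\<in>dual_code N C \<inter> supported_on (insert i (\<Union>l\<in>{2..v}. RI i l)). x i \<noteq> 0"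
    and "v - 2 \<le> vec.dim (dual_code N C \<inter> supported_on (\<Union>l\<in>{2..v}. RI i l))"
proof -
  have i: "i \<in> {1..n}" using I by blast
  have not_in: "i \<notin> RI i l" if "l \<in> {2..v}" for l
    using ob_family_not_self_recovering[OF fam I(2)] that by auto
  then show "i \<notin> (\<Union>l\<in>{2..v}. RI i l)" by blast
  have rec: "recovering_set N C i (RI i l)" if "l \<in> {2..v}" for l
    using fam I(2) that by (auto simp: ob_family_def)
  have "\<forall>l\<in>{1..v}. \<forall>l'\<in>{1..v}. (i, l) \<noteq> (i, l') \<longrightarrow> RI i l \<inter> RI i l' = {}"
    using fam I(2) unfolding ob_family_def by blast
  then have disj: "RI i l \<inter> RI i l' = {}" if "l \<in> {2..v}" "l' \<in> {2..v}" "l \<noteq> l'" for l l'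
    using that by auto
  have c0: "gen i \<in> C" "gen i i \<noteq> 0" using gen_in_code gen_apply i by (auto simp: unit_vec_def)
  have iN: "i \<in> {1..N}" using i dimension_le_length by auto
  note vectors = dual_code_vectors_of_disjoint_recovering_sets
    [where L = "{2..v}" and R = "RI i", OF _ _ rec not_in disj iN c0]
  show "\<exists>x\<in>dual_code N C \<inter> supported_on (insert i (\<Union>l\<in>{2..v}. RI i l)). x i \<noteq> 0"
    using vectors(1) v by simp
  show "v - 2 \<le> vec.dim (dual_code N C \<inter> supported_on (\<Union>l\<in>{2..v}. RI i l))"
    using vectors(2) v by simp
qed

section \<open>Cutting by hyperplanes\<close>

lemma witness_survives_cut:
  assumes U: "vec.subspace U" and z: "z \<in> U \<inter> supported_on A" "dot N y z \<noteq> 0"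
    and x: "x \<in> U \<inter> supported_on (insert i A)" "x i \<noteq> 0" and i: "i \<notin> A"
  shows "\<exists>x'\<in>U \<inter> hyperplane N y \<inter> supported_on (insert i A). x' i \<noteq> 0"
proof
  define x' where "x' = x - smul (dot N y x / dot N y z) z"
  have "z \<in> supported_on (insert i A)" using z(1) by (auto simp: supported_on_def)
  then have "x' \<in> U \<inter> supported_on (insert i A)"
    using U x z by (simp add: x'_def vec.subspace_diff vec.subspace_scale
        supported_on_subspace[THEN vec.subspace_diff] supported_on_subspace[THEN vec.subspace_scale])
  moreover have "x' \<in> hyperplane N y" using z(2) by (simp add: x'_def hyperplane_def dot_diff dot_smul)
  ultimately show "x' \<in> U \<inter> hyperplane N y \<inter> supported_on (insert i A)" by blast
  have "z i = 0" using z(1) i by (auto simp: supported_on_def supp_def)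
  then show "x' i \<noteq> 0" using x(2) by (simp add: x'_def smul_def)
qed

lemma exists_hyperplane_cut:
  fixes D :: "(nat \<Rightarrow> 'a::{finite,field}) set"
  assumes D: "vec.subspace D" "D \<subseteq> vecs N"
    and P: "finite P" "P \<noteq> {}" "card P < card (UNIV :: 'a set)"
    and not_in: "\<And>p. p \<in> P \<Longrightarrow> pt p \<notin> A p"
    and witness: "\<And>p. p \<in> P \<Longrightarrow> \<exists>x\<in>D \<inter> supported_on (insert (pt p) (A p)). x (pt p) \<noteq> 0"
    and pos: "\<And>p. p \<in> P \<Longrightarrow> 0 < vec.dim (D \<inter> supported_on (A p))"
  shows "\<exists>y. vec.dim D = vec.dim (D \<inter> hyperplane N y) + 1 \<and>
    (\<forall>p\<in>P. vec.dim (D \<inter> supported_on (A p)) = vec.dim (D \<inter> hyperplane N y \<inter> supported_on (A p)) + 1) \<and>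
    (\<forall>p\<in>P. \<exists>x\<in>D \<inter> hyperplane N y \<inter> supported_on (insert (pt p) (A p)). x (pt p) \<noteq> 0)"
proof -
  obtain z where z: "\<And>p. p \<in> P \<Longrightarrow> z p \<in> D \<inter> supported_on (A p) \<and> z p \<noteq> 0"
    using dim_pos_imp_nonzero[OF pos] by metis
  have "\<exists>y\<in>vecs N. \<forall>z'\<in>z ` P. dot N y z' \<noteq> 0"
    using z D(2) P card_image_le[OF P(1), of z] by (intro exists_vec_nonorthogonal) force+
  then obtain y where y: "\<And>p. p \<in> P \<Longrightarrow> dot N y (z p) \<noteq> 0" by blast
  obtain p0 where "p0 \<in> P" using P(2) by blast
  show ?thesis
  proof (intro exI conjI ballI)
    show "vec.dim D = vec.dim (D \<inter> hyperplane N y) + 1"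
      using z y \<open>p0 \<in> P\<close> by (intro dim_eq_dim_inter_hyperplane_Suc[OF D]) auto
  next
    fix p assume p: "p \<in> P"
    have "vec.dim (D \<inter> supported_on (A p)) = vec.dim (D \<inter> supported_on (A p) \<inter> hyperplane N y) + 1"
      using z[OF p] y[OF p] D
      by (intro dim_eq_dim_inter_hyperplane_Suc vec.subspace_inter supported_on_subspace) auto
    then show "vec.dim (D \<inter> supported_on (A p)) = vec.dim (D \<inter> hyperplane N y \<inter> supported_on (A p)) + 1"
      by (simp add: Int_ac)
    show "\<exists>x\<in>D \<inter> hyperplane N y \<inter> supported_on (insert (pt p) (A p)). x (pt p) \<noteq> 0"
      using witness[OF p] z[OF p] y[OF p] not_in[OF p] witness_survives_cut[OF D(1)] by blast
  qed
qed

lemma exists_subspace_cut_keeping_witnesses: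
  fixes D :: "(nat \<Rightarrow> 'a::{finite,field}) set"
  assumes D: "vec.subspace D" "D \<subseteq> vecs N"
    and P: "finite P" "P \<noteq> {}" "card P < card (UNIV :: 'a set)"
    and not_in: "\<And>p. p \<in> P \<Longrightarrow> pt p \<notin> A p"
    and witness: "\<And>p. p \<in> P \<Longrightarrow> \<exists>x\<in>D \<inter> supported_on (insert (pt p) (A p)). x (pt p) \<noteq> 0"
    and dim: "\<And>p. p \<in> P \<Longrightarrow> t \<le> vec.dim (D \<inter> supported_on (A p))"
  shows "\<exists>U. vec.subspace U \<and> U \<subseteq> D \<and> vec.dim U + t = vec.dim D \<and>
    (\<forall>p\<in>P. \<exists>x\<in>U \<inter> supported_on (insert (pt p) (A p)). x (pt p) \<noteq> 0)"
  using D witness dim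
proof (induction t arbitrary: D)
  case 0
  then show ?case by (intro exI[of _ D]) auto
next
  case (Suc t)
  have pos: "\<And>p. p \<in> P \<Longrightarrow> 0 < vec.dim (D \<inter> supported_on (A p))"
    using Suc.prems(4) by (fastforce dest: Suc_le_lessD)
  obtain y where cut: "vec.dim D = vec.dim (D \<inter> hyperplane N y) + 1"
    "\<And>p. p \<in> P \<Longrightarrow>
      vec.dim (D \<inter> supported_on (A p)) = vec.dim (D \<inter> hyperplane N y \<inter> supported_on (A p)) + 1"
    "\<And>p. p \<in> P \<Longrightarrow> \<exists>x\<in>D \<inter> hyperplane N y \<inter> supported_on (insert (pt p) (A p)). x (pt p) \<noteq> 0"
    using exists_hyperplane_cut[OF Suc.prems(1,2) P, of pt A] not_in Suc.prems(3) pos by blast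
  have "\<exists>U. vec.subspace U \<and> U \<subseteq> D \<inter> hyperplane N y \<and> vec.dim U + t = vec.dim (D \<inter> hyperplane N y) \<and>
    (\<forall>p\<in>P. \<exists>x\<in>U \<inter> supported_on (insert (pt p) (A p)). x (pt p) \<noteq> 0)"
  proof (rule Suc.IH)
    show "vec.subspace (D \<inter> hyperplane N y)"
      using Suc.prems(1) by (intro vec.subspace_inter hyperplane_subspace)
    show "\<And>p. p \<in> P \<Longrightarrow> t \<le> vec.dim (D \<inter> hyperplane N y \<inter> supported_on (A p))"
      using Suc.prems(4) cut(2) by fastforce
  qed (use Suc.prems(2) cut(3) in auto)
  then show ?case using cut(1) by auto
qed

lemma card_subset_member_pairs:
  "card (SIGMA I:{I. I \<subseteq> {1..n} \<and> card I = u}. I) = u * (n choose u)"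
proof -
  have fin: "finite {I. I \<subseteq> {1..n::nat} \<and> card I = u}" by (rule finite_subset[of _ "Pow {1..n}"]) auto
  have "card (SIGMA I:{I. I \<subseteq> {1..n} \<and> card I = u}. I) = (\<Sum>I\<in>{I. I \<subseteq> {1..n} \<and> card I = u}. u)"
    using fin by (subst card_SigmaI) (auto intro: finite_subset)
  also have "\<dots> = u * (n choose u)" using n_subsets[of "{1..n}" u] by simp
  finally show ?thesis .
qed

theorem mainTheorem2:
  fixes C :: "(nat \<Rightarrow> 'a::{finite,field}) set"
    and N n u v :: nat
    and R :: "nat set \<Rightarrow> nat \<Rightarrow> nat \<Rightarrow> nat set"
  assumes "ordered_batch_code N n u v C"
    and "0 < u" and "2 \<le> v" and "u * v \<le> n"
    and "card (UNIV :: 'a set) \<ge> max (4 * u * (n choose u)) 7"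
    and "\<forall>I. I \<subseteq> {1..n} \<and> card I = u \<longrightarrow> ob_family N C v I (R I)"
  shows "\<exists>V. is_subspace V \<and> V \<subseteq> dual_code N C \<and>
           int (vdim V) = (int N - int n) - int v + 2 \<and>
           (\<forall>I. I \<subseteq> {1..n} \<and> card I = u \<longrightarrow>
              (\<forall>i\<in>I. \<exists>w\<in>V. i \<in> supp w \<and> supp w \<subseteq> (\<Union>l\<in>{2..v}. R I i l) \<union> {i}))"
proof -
  interpret systematic_code N n C
    using assms(1) by unfold_locales (auto simp: ordered_batch_code_def)
  define P where "P = (SIGMA I:{I. I \<subseteq> {1..n} \<and> card I = u}. I)"
  define A where "A = (\<lambda>(I, i). \<Union>l\<in>{2..v}. R I i l)"
  have "u \<le> n" using assms(3,4) by (metis le_trans mult_le_mono2 mult.right_neutral one_le_numeral)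
  then have "0 < card P" "card P < card (UNIV :: 'a set)"
    using card_subset_member_pairs[of n u] assms(2,5) by (auto simp: P_def)
  then have P: "finite P" "P \<noteq> {}" "card P < card (UNIV :: 'a set)" by (auto simp: card_gt_0_iff)
  have pair: "snd p \<notin> A p \<and> (\<exists>x\<in>dual_code N C \<inter> supported_on (insert (snd p) (A p)). x (snd p) \<noteq> 0) \<and>
      v - 2 \<le> vec.dim (dual_code N C \<inter> supported_on (A p))" if "p \<in> P" for p
    using that assms(6) ob_family_dual_vectors[of v "fst p" "R (fst p)" "snd p"] assms(3)
    by (auto simp: P_def A_def split: prod.splits)
  have "dual_code N C \<subseteq> vecs N" by (auto simp: dual_code_def)
  then have "\<exists>V. vec.subspace V \<and> V \<subseteq> dual_code N C \<and> vec.dim V + (v - 2) = vec.dim (dual_code N C) \<and>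
      (\<forall>p\<in>P. \<exists>x\<in>V \<inter> supported_on (insert (snd p) (A p)). x (snd p) \<noteq> 0)"
    by (rule exists_subspace_cut_keeping_witnesses[OF dual_code_subspace _ P]) (use pair in blast)+
  then obtain V where V: "vec.subspace V" "V \<subseteq> dual_code N C" "vec.dim V + (v - 2) = N - n"
    "\<forall>p\<in>P. \<exists>x\<in>V \<inter> supported_on (insert (snd p) (A p)). x (snd p) \<noteq> 0"
    using dim_dual_code by auto
  show ?thesis
  proof (intro exI[of _ V] conjI allI impI ballI)
    show "is_subspace V" "V \<subseteq> dual_code N C" using V(1,2) by (simp_all add: is_subspace_def)
    show "int (vdim V) = int N - int n - int v + 2"
      using V(3) dimension_le_length assms(3) unfolding vdim_def by linarith
  next
    fix I i assume "I \<subseteq> {1..n} \<and> card I = u" "i \<in> I"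
    then have "(I, i) \<in> P" by (simp add: P_def)
    then obtain x where "x \<in> V" "supp x \<subseteq> insert i (\<Union>l\<in>{2..v}. R I i l)" "x i \<noteq> 0"
      using V(4) by (auto simp: A_def supported_on_def)
    then show "\<exists>w\<in>V. i \<in> supp w \<and> supp w \<subseteq> (\<Union>l\<in>{2..v}. R I i l) \<union> {i}"
      by (intro bexI[of _ x]) (auto simp: supp_def)
  qed
qed

end
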